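(* In the QC setting, suppose the weights are $\alpha(i)=\frac{a}{(i+1)^{\tau}}$ with $a>0$ and $\tfrac12<\tau\le1$. Let $\theta$ be the a.s. finite random variable with $\mathbf{x}(i)\to\theta\mathbf{1}$ a.s. (which exists for the QC recursion). Then $\lim_{i\to\infty}\mathbb{E}\big[(x_n(i)-\theta)^2\big]=0$ for every $n=1,\dots,N$.
   Context: QC setting. Let $N\ge 2$; all random objects live on one probability space. $\{L(i)\}_{i\ge0}$ is an i.i.d. sequence of random graph Laplacians $L(i)=D(i)-A(i)$, where $A(i)$ is the adjacency matrix (symmetric, $\{0,1\}$-valued, zero diagonal) of a random undirected simple graph on $\{1,\dots,N\}$, $D(i)=\mathrm{diag}(d_1(i),\dots,d_N(i))$ with $d_n(i)$ the degree of node $n$, and $\Omega_n(i)=\{l:A_{nl}(i)=1\}$. Link failures at a given time may be arbitrarily correlated across edges. Let $\overline{L}=\mathbb{E}[L(i)]$ with eigenvalues $0=\lambda_1(\overline{L})\le\lambda_2(\overline{L})\le\cdots\le\lambda_N(\overline{L})$; assume $\lambda_2(\overline{L})>0$. $\mathcal{M}$ denotes the set of realizable edges. Quantizer: step $\Delta>0$, $q(y)=k\Delta$ if $(k-\tfrac12)\Delta\le y<(k+\tfrac12)\Delta$, $k\in\mathbb{Z}$. Dither: $\{\nu_{nl}(i)\}$ i.i.d. uniform on $[-\Delta/2,\Delta/2)$, independent of $\{L(i)\}$. QC recursion: $x_n(i+1)=(1-\alpha(i)d_n(i))x_n(i)+\alpha(i)\sum_{l\in\Omega_n(i)}q(x_l(i)+\nu_{nl}(i))$,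 with deterministic $\mathbf{x}(0)\in\mathbb{R}^N$. With $\varepsilon_{nl}(i)=q(x_l(i)+\nu_{nl}(i))-(x_l(i)+\nu_{nl}(i))$, $\Upsilon_n(i)=-\sum_{l\in\Omega_n(i)}\nu_{nl}(i)$, $\Psi_n(i)=-\sum_{l\in\Omega_n(i)}\varepsilon_{nl}(i)$, this reads $\mathbf{x}(i+1)=\mathbf{x}(i)-\alpha(i)[L(i)\mathbf{x}(i)+\Upsilon(i)+\Psi(i)]$. Conditionally on $\mathbf{x}(0),\{L(j),\Upsilon(j),\Psi(j)\}_{j<i}$ and $L(i)$, the $\varepsilon_{nl}(i)$ are i.i.d. uniform on $[-\Delta/2,\Delta/2)$ (as are the $\nu_{nl}(i)$). *)

theory Defs
  imports "HOL-Probability.Probability" "HOL-Computational_Algebra.Polynomial"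
begin

text \<open>Graphs on the finite node type 'n are given by adjacency predicates
  G :: 'n => 'n => bool (symmetric, irreflexive).\<close>

definition deg :: "('n::finite \<Rightarrow> 'n \<Rightarrow> bool) \<Rightarrow> 'n \<Rightarrow> nat" where
  "deg G n = card {l. G n l}"

definition lap :: "('n::finite \<Rightarrow> 'n \<Rightarrow> bool) \<Rightarrow> 'n \<Rightarrow> 'n \<Rightarrow> real" where
  "lap G n l = (if n = l then real (deg G n) else 0) - (if G n l then 1 else 0)"

text \<open>Quantizer: q(y) = k*Delta iff (k - 1/2) Delta <= y < (k + 1/2) Delta.\<close>
definition quant :: "real \<Rightarrow> real \<Rightarrow> real" where
  "quant \<Delta> y = \<Delta> * of_int \<lfloor>y / \<Delta> + 1/2\<rfloor>"

definition charpoly :: "real^'n^'n \<Rightarrow> real poly" where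
  "charpoly A = det (\<chi> i j. (if i = j then [:0, 1:] else 0) - [:A $ i $ j:])"

definition eigenvalues_sorted :: "real^'n^'n \<Rightarrow> real list" where
  "eigenvalues_sorted A = sorted_list_of_multiset (proots (charpoly A))"

text \<open>lambda_2: the second smallest eigenvalue (index 1 of the sorted list).\<close>
definition lambda2 :: "real^'n^'n \<Rightarrow> real" where
  "lambda2 A = eigenvalues_sorted A ! 1"

end

theory Submission
  imports Defs "HOL-Real_Asymp.Real_Asymp"
begin

(* The limit theta is given, and x_n(i) -> theta almost surely; so by dominated
   convergence it suffices to bound all iterates by one deterministic constant
   on an almost-sure event.  That bound is a purely deterministic fact about
   the QC update, valid for every graph sequence and every dither sequence that
   lies in [-Delta/2, Delta/2):
   - each update multiplies a sup-norm bound b by at most (1 + 2 alpha N) and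
     adds alpha N Delta (crude growth bound), and
   - once alpha(i) N <= 1, the update is a convex combination of the current
     value and quantized neighbour values, so every box [-c Delta, c Delta]
     (c an integer) is invariant, because the quantizer maps the dithered
     values of such a box into the box.
   Since alpha(i) -> 0, the growth phase is finite and the iterates stay in a
   fixed box afterwards.  The file develops the quantizer facts, the one-step
   estimates, the bound for whole trajectories, measurability of the iterates,
   a dominated-convergence lemma for squared errors, and finally the theorem.
   The i.i.d. and spectral hypotheses are needed only for the existence of
   theta, which the theorem takes as given. *)

section \<open>The quantizer\<close>

lemma quant_err:
  assumes "\<Delta> > 0" shows "\<bar>quant \<Delta> z - z\<bar> \<le> \<Delta>/2"
proof -
  let ?k = "real_of_int \<lfloor>z/\<Delta> + 1/2\<rfloor>"
  have "?k \<le> z/\<Delta> + 1/2" "z/\<Delta> + 1/2 < ?k + 1"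
    by (rule of_int_floor_le, rule real_of_int_floor_add_one_gt)
  then have "\<Delta> * ?k \<le> \<Delta> * (z/\<Delta> + 1/2)" "\<Delta> * (z/\<Delta> + 1/2) < \<Delta> * (?k + 1)"
    using assms by (auto intro: mult_left_mono mult_strict_left_mono)
  then have "\<Delta> * ?k \<le> z + \<Delta>/2" "z + \<Delta>/2 < \<Delta> * ?k + \<Delta>"
    using assms by (simp_all add: algebra_simps)
  then show ?thesis unfolding quant_def abs_le_iff by linarith
qed

lemma quant_grid_box:
  assumes "\<Delta> > 0" "\<bar>z\<bar> \<le> of_int c * \<Delta>" "- (\<Delta>/2) \<le> v" "v < \<Delta>/2"
  shows "\<bar>quant \<Delta> (z + v)\<bar> \<le> of_int c * \<Delta>"
proof -
  let ?k = "\<lfloor>(z + v)/\<Delta> + 1/2\<rfloor>"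
  have "- of_int c \<le> (z + v)/\<Delta> + 1/2" "(z + v)/\<Delta> + 1/2 < of_int c + 1"
    using assms by (simp_all add: field_simps abs_le_iff)
  then have "- c \<le> ?k" "?k \<le> c"
    by (simp_all add: le_floor_iff floor_le_iff)
  then have "\<bar>real_of_int ?k\<bar> \<le> of_int c" by linarith
  then show ?thesis
    unfolding quant_def using assms(1) by (simp add: abs_mult mult.commute)
qed

section \<open>One step of the QC update\<close>

definition qc_update ::
    "real \<Rightarrow> real \<Rightarrow> ('n::finite \<Rightarrow> 'n \<Rightarrow> bool) \<Rightarrow> ('n \<Rightarrow> real) \<Rightarrow> ('n \<Rightarrow> 'n \<Rightarrow> real) \<Rightarrow> 'n \<Rightarrow> real"
  where "qc_update \<Delta> al G y v n =
    (1 - al * real (deg G n)) * y n + al * (\<Sum>l\<in>{l. G n l}. quant \<Delta> (y l + v n l))"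

definition dither_ok :: "real \<Rightarrow> ('n \<Rightarrow> 'n \<Rightarrow> bool) \<Rightarrow> ('n \<Rightarrow> 'n \<Rightarrow> real) \<Rightarrow> bool"
  where "dither_ok \<Delta> G v \<longleftrightarrow> (\<forall>n l. G n l \<longrightarrow> - (\<Delta>/2) \<le> v n l \<and> v n l < \<Delta>/2)"

lemma deg_le_card: "deg (G::'n::finite \<Rightarrow> 'n \<Rightarrow> bool) n \<le> CARD('n)"
  unfolding deg_def by (rule card_mono) auto

lemma qc_update_abs_le:
  assumes al: "al \<ge> 0" and y: "\<bar>y n\<bar> \<le> b"
    and Q: "\<And>l. G n l \<Longrightarrow> \<bar>quant \<Delta> (y l + v n l)\<bar> \<le> Q"
  shows "\<bar>qc_update \<Delta> al G y v n\<bar>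
           \<le> \<bar>1 - al * real (deg G n)\<bar> * b + al * (real (deg G n) * Q)"
proof -
  let ?S = "\<Sum>l\<in>{l. G n l}. quant \<Delta> (y l + v n l)"
  have "\<bar>?S\<bar> \<le> (\<Sum>l\<in>{l. G n l}. Q)"
    using Q by (intro order_trans[OF sum_abs] sum_mono) auto
  then have S: "\<bar>?S\<bar> \<le> real (deg G n) * Q" by (simp add: deg_def)
  have "\<bar>qc_update \<Delta> al G y v n\<bar> \<le> \<bar>1 - al * real (deg G n)\<bar> * \<bar>y n\<bar> + al * \<bar>?S\<bar>"
    unfolding qc_update_def using al by (simp add: abs_mult order_trans[OF abs_triangle_ineq])
  also have "\<dots> \<le> \<bar>1 - al * real (deg G n)\<bar> * b + al * (real (deg G n) * Q)"
    using y S al by (intro add_mono mult_left_mono) auto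
  finally show ?thesis .
qed

lemma qc_update_growth:
  fixes y :: "'n::finite \<Rightarrow> real" and al :: real
  assumes \<Delta>: "\<Delta> > 0" and al: "al \<ge> 0" and y: "\<And>m. \<bar>y m\<bar> \<le> b"
    and v: "dither_ok \<Delta> G v"
  shows "\<bar>qc_update \<Delta> al G y v n\<bar> \<le> (1 + 2 * al * real CARD('n)) * b + al * real CARD('n) * \<Delta>"
proof -
  define d where "d = real (deg G n)"
  have d: "0 \<le> d" "d \<le> CARD('n)" using deg_le_card[of G n] by (simp_all add: d_def)
  have b: "b \<ge> 0" using y[of n] by linarith
  have Q: "\<bar>quant \<Delta> (y l + v n l)\<bar> \<le> b + \<Delta>" if "G n l" for l
  proof -
    have "\<bar>v n l\<bar> \<le> \<Delta>/2" using v that unfolding dither_ok_def by fastforce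
    then show ?thesis using quant_err[OF \<Delta>, of "y l + v n l"] y[of l] by linarith
  qed
  have "\<bar>qc_update \<Delta> al G y v n\<bar> \<le> \<bar>1 - al * d\<bar> * b + al * (d * (b + \<Delta>))"
    using qc_update_abs_le[where G = G and y = y and v = v and n = n, OF al y[of n] Q] by (simp add: d_def)
  also have "\<dots> \<le> (1 + al * d) * b + al * d * (b + \<Delta>)"
    using al d b by (intro add_mono mult_right_mono) (auto simp: abs_le_iff)
  also have "\<dots> \<le> (1 + al * real CARD('n)) * b + al * real CARD('n) * (b + \<Delta>)"
    using al d b \<Delta> by (intro add_mono mult_right_mono mult_left_mono) auto
  finally show ?thesis by (simp add: algebra_simps)
qed

text \<open>For small step sizes the update is a convex combination, and every grid
  box \<open>[-c\<Delta>, c\<Delta>]\<close> is invariant.\<close>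
lemma qc_update_grid_invariant:
  fixes y :: "'n::finite \<Rightarrow> real" and al :: real
  assumes \<Delta>: "\<Delta> > 0" and al: "al \<ge> 0" and small: "al * real CARD('n) \<le> 1"
    and y: "\<And>m. \<bar>y m\<bar> \<le> of_int c * \<Delta>" and v: "dither_ok \<Delta> G v"
  shows "\<bar>qc_update \<Delta> al G y v n\<bar> \<le> of_int c * \<Delta>"
proof -
  define d where "d = real (deg G n)"
  have "al * d \<le> al * real CARD('n)"
    using deg_le_card[of G n] al by (intro mult_left_mono) (simp_all add: d_def)
  then have convex: "0 \<le> 1 - al * d" using small by linarith
  have Q: "\<bar>quant \<Delta> (y l + v n l)\<bar> \<le> of_int c * \<Delta>" if "G n l" for l
    using quant_grid_box[OF \<Delta> y] v that unfolding dither_ok_def by blast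
  have "\<bar>qc_update \<Delta> al G y v n\<bar> \<le> \<bar>1 - al * d\<bar> * (of_int c * \<Delta>) + al * (d * (of_int c * \<Delta>))"
    using qc_update_abs_le[where G = G and y = y and v = v and n = n, OF al y[of n] Q] by (simp add: d_def)
  also have "\<dots> = of_int c * \<Delta>" using convex by (simp add: algebra_simps)
  finally show ?thesis .
qed

section \<open>Uniform bound along QC trajectories\<close>

definition qc_trajectory ::
    "real \<Rightarrow> (nat \<Rightarrow> real) \<Rightarrow> (nat \<Rightarrow> 'n::finite \<Rightarrow> 'n \<Rightarrow> bool) \<Rightarrow> (nat \<Rightarrow> 'n \<Rightarrow> 'n \<Rightarrow> real)
       \<Rightarrow> (nat \<Rightarrow> 'n \<Rightarrow> real) \<Rightarrow> bool"
  where "qc_trajectory \<Delta> \<alpha> G v y \<longleftrightarrow>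
    (\<forall>i. y (Suc i) = qc_update \<Delta> (\<alpha> i) (G i) (y i) (v i) \<and> dither_ok \<Delta> (G i) (v i))"

text \<open>The bound obtained by iterating the growth estimate.\<close>
fun growth_bound :: "(nat \<Rightarrow> real) \<Rightarrow> real \<Rightarrow> real \<Rightarrow> real \<Rightarrow> nat \<Rightarrow> real" where
  "growth_bound \<alpha> N \<Delta> b0 0 = b0"
| "growth_bound \<alpha> N \<Delta> b0 (Suc i) =
     (1 + 2 * \<alpha> i * N) * growth_bound \<alpha> N \<Delta> b0 i + \<alpha> i * N * \<Delta>"

lemma trajectory_growth:
  fixes y :: "nat \<Rightarrow> 'n::finite \<Rightarrow> real"
  assumes "\<Delta> > 0" "\<And>i. \<alpha> i \<ge> 0" "qc_trajectory \<Delta> \<alpha> G v y" "\<And>m. \<bar>y 0 m\<bar> \<le> b0"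
  shows "\<bar>y i m\<bar> \<le> growth_bound \<alpha> (real CARD('n)) \<Delta> b0 i"
  using assms(4) proof (induction i arbitrary: m)
  case (Suc i)
  then show ?case
    using qc_update_growth[OF assms(1,2), of "y i"] assms(3)
    unfolding qc_trajectory_def by auto
qed simp

lemma trajectory_grid_invariant:
  fixes y :: "nat \<Rightarrow> 'n::finite \<Rightarrow> real"
  assumes "\<Delta> > 0" "\<And>i. \<alpha> i \<ge> 0" "qc_trajectory \<Delta> \<alpha> G v y"
    and small: "\<And>i. i \<ge> j \<Longrightarrow> \<alpha> i * real CARD('n) \<le> 1"
    and start: "\<And>m. \<bar>y j m\<bar> \<le> of_int c * \<Delta>"
  shows "\<bar>y (j + k) m\<bar> \<le> of_int c * \<Delta>"
proof (induction k arbitrary: m)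
  case (Suc k)
  then show ?case
    using qc_update_grid_invariant[OF assms(1,2) small, of "j + k" "y (j + k)"] assms(3)
    unfolding qc_trajectory_def by auto
qed (use start in simp)

lemma trajectory_uniform_bound:
  fixes y0 :: "'n::finite \<Rightarrow> real"
  assumes \<Delta>: "\<Delta> > 0" and \<alpha>_nonneg: "\<And>i. \<alpha> i \<ge> 0" and \<alpha>_lim: "\<alpha> \<longlonglongrightarrow> 0"
  obtains B where "\<And>G v y i m. y 0 = y0 \<Longrightarrow> qc_trajectory \<Delta> \<alpha> G v y \<Longrightarrow> \<bar>y i m\<bar> \<le> B"
proof -
  let ?N = "real CARD('n)"
  obtain i0 where "\<And>i. i \<ge> i0 \<Longrightarrow> \<alpha> i < 1 / ?N"
    using order_tendstoD(2)[OF \<alpha>_lim, of "1 / ?N"] by (auto simp: eventually_sequentially)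
  then have small: "\<And>i. i \<ge> i0 \<Longrightarrow> \<alpha> i * ?N \<le> 1"
    by (simp add: field_simps less_imp_le)
  define bs where "bs = growth_bound \<alpha> ?N \<Delta> (\<Sum>m\<in>UNIV. \<bar>y0 m\<bar>)"
  define c where "c = \<lceil>bs i0 / \<Delta>\<rceil>"
  have bs_c: "bs i0 \<le> of_int c * \<Delta>"
    unfolding c_def using \<Delta> by (metis divide_le_eq le_of_int_ceiling)
  have "\<bar>y i m\<bar> \<le> max (Max (bs ` {..i0})) (of_int c * \<Delta>)"
    if y: "y 0 = y0" "qc_trajectory \<Delta> \<alpha> G v y" for G v y i m
  proof -
    have "\<bar>y 0 m'\<bar> \<le> (\<Sum>m\<in>UNIV. \<bar>y0 m\<bar>)" for m'
      using y(1) by (auto intro: member_le_sum)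
    then have growth: "\<bar>y j m'\<bar> \<le> bs j" for j m'
      using trajectory_growth[OF \<Delta> \<alpha>_nonneg y(2)] unfolding bs_def by blast
    show ?thesis
    proof (cases "i \<le> i0")
      case True
      then have "bs i \<le> Max (bs ` {..i0})" by (intro Max_ge) auto
      then show ?thesis using growth[of i m] by linarith
    next
      case False
      then obtain k where i: "i = i0 + k" using le_Suc_ex nat_le_linear by blast
      have start: "\<bar>y i0 m'\<bar> \<le> of_int c * \<Delta>" for m' using growth[of i0 m'] bs_c by linarith
      have "\<bar>y (i0 + k) m\<bar> \<le> of_int c * \<Delta>"
        using trajectory_grid_invariant[where j = i0 and c = c, OF \<Delta> \<alpha>_nonneg y(2) small start] .
      then show ?thesis unfolding i by linarith
    qed
  qed
  then show ?thesis using that by blast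
qed

section \<open>Probabilistic ingredients\<close>

lemma qc_iterate_measurable:
  fixes x :: "nat \<Rightarrow> 'a \<Rightarrow> 'n::finite \<Rightarrow> real"
  assumes A: "\<And>i. A i \<in> measurable M (count_space UNIV)"
    and \<nu>: "\<And>i n l. n \<noteq> l \<Longrightarrow> \<nu> i n l \<in> borel_measurable M"
    and irrefl: "\<And>i \<omega> n. \<not> A i \<omega> n n"
    and x_0: "\<And>\<omega>. x 0 \<omega> = x0"
    and x_Suc: "\<And>i \<omega>. x (Suc i) \<omega> = qc_update \<Delta> (\<alpha> i) (A i \<omega>) (x i \<omega>) (\<lambda>n l. \<nu> i n l \<omega>)"
  shows "(\<lambda>\<omega>. x i \<omega> n) \<in> borel_measurable M"
proof (induction i arbitrary: n)
  case 0
  then show ?case by (simp add: x_0)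
next
  case (Suc i)
  have [measurable]: "quant \<Delta> \<in> borel_measurable borel" unfolding quant_def by measurable
  have "(\<lambda>\<omega>. A i \<omega> n l) \<in> measurable M (count_space UNIV)" for l
    by (rule measurable_compose[OF A]) simp
  then have [measurable]: "{\<omega> \<in> space M. A i \<omega> n l} \<in> sets M" for l
    by measurable
  have [measurable]: "(\<lambda>\<omega>. real (deg (A i \<omega>) n)) \<in> borel_measurable M"
    by (rule measurable_compose[OF A]) simp
  have term_meas: "(\<lambda>\<omega>. if A i \<omega> n l then quant \<Delta> (x i \<omega> l + \<nu> i n l \<omega>) else 0)
      \<in> borel_measurable M" for l
  proof (cases "l = n")
    case False
    note [measurable] = \<nu>[OF False[symmetric]] Suc.IH[of l]
    show ?thesis by measurable
  qed (simp add: irrefl)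
  have "(\<lambda>\<omega>. x (Suc i) \<omega> n) = (\<lambda>\<omega>. (1 - \<alpha> i * real (deg (A i \<omega>) n)) * x i \<omega> n
      + \<alpha> i * (\<Sum>l\<in>UNIV. if A i \<omega> n l then quant \<Delta> (x i \<omega> l + \<nu> i n l \<omega>) else 0))"
    by (simp add: x_Suc qc_update_def sum.inter_filter[symmetric])
  then show ?case using term_meas Suc.IH[of n] by simp
qed

lemma uniform_dither_AE:
  fixes \<nu> :: "nat \<Rightarrow> 'n::countable \<Rightarrow> 'n \<Rightarrow> 'a \<Rightarrow> real" and \<Delta> :: real
  assumes \<nu>: "\<And>i n l. n \<noteq> l \<Longrightarrow> \<nu> i n l \<in> borel_measurable M"
    and unif: "\<And>i n l. n \<noteq> l \<Longrightarrow> distr M lborel (\<nu> i n l) = uniform_measure lborel {-\<Delta>/2..<\<Delta>/2}"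
    and \<Delta>: "\<Delta> > 0"
  shows "AE \<omega> in M. \<forall>i n l. n \<noteq> l \<longrightarrow> - (\<Delta>/2) \<le> \<nu> i n l \<omega> \<and> \<nu> i n l \<omega> < \<Delta>/2"
proof -
  have "AE \<omega> in M. n \<noteq> l \<longrightarrow> - (\<Delta>/2) \<le> \<nu> i n l \<omega> \<and> \<nu> i n l \<omega> < \<Delta>/2" for i n l
  proof (cases "n = l")
    case False
    have "AE z in distr M lborel (\<nu> i n l). z \<in> {-\<Delta>/2..<\<Delta>/2}"
      unfolding unif[OF False] using \<Delta> by (intro AE_uniform_measureI) auto
    from AE_distrD[OF _ this] \<nu>[OF False] show ?thesis by auto
  qed simp
  then show ?thesis by (simp add: AE_all_countable)
qed

lemma bounded_AE_convergence_mean_square: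
  fixes f :: "nat \<Rightarrow> 'a \<Rightarrow> real"
  assumes "finite_measure M"
    and f: "\<And>i. f i \<in> borel_measurable M" and g: "g \<in> borel_measurable M"
    and bound: "AE \<omega> in M. \<forall>i. \<bar>f i \<omega>\<bar> \<le> B"
    and lim: "AE \<omega> in M. (\<lambda>i. f i \<omega>) \<longlonglongrightarrow> g \<omega>"
  shows "(\<forall>i. integrable M (\<lambda>\<omega>. (f i \<omega> - g \<omega>)\<^sup>2))
       \<and> (\<lambda>i. \<integral>\<omega>. (f i \<omega> - g \<omega>)\<^sup>2 \<partial>M) \<longlonglongrightarrow> 0"
proof -
  interpret finite_measure M by (rule assms(1))
  let ?s = "\<lambda>i \<omega>. (f i \<omega> - g \<omega>)\<^sup>2"
  have s_meas: "?s i \<in> borel_measurable M" for i using f g by measurable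
  have s_bound: "AE \<omega> in M. norm (?s i \<omega>) \<le> (2 * B)\<^sup>2" for i
    using bound lim
  proof eventually_elim
    case (elim \<omega>)
    then have "\<bar>g \<omega>\<bar> \<le> B" by (intro LIMSEQ_le_const2[OF tendsto_rabs]) auto
    moreover have "\<bar>f i \<omega>\<bar> \<le> B" using elim(1) by blast
    ultimately have "\<bar>f i \<omega> - g \<omega>\<bar> \<le> 2 * B"
      using abs_triangle_ineq4[of "f i \<omega>" "g \<omega>"] by linarith
    then have "\<bar>f i \<omega> - g \<omega>\<bar>\<^sup>2 \<le> (2 * B)\<^sup>2" by (intro power_mono) auto
    then show ?case by simp
  qed
  have s_lim: "AE \<omega> in M. (\<lambda>i. ?s i \<omega>) \<longlonglongrightarrow> 0"
    using lim by eventually_elim (auto intro: tendsto_eq_intros LIM_zero)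
  have "(\<lambda>i. integral\<^sup>L M (?s i)) \<longlonglongrightarrow> integral\<^sup>L M (\<lambda>_. 0::real)"
    by (rule integral_dominated_convergence[OF _ s_meas _ s_lim s_bound]) simp_all
  moreover have "integrable M (?s i)" for i
    by (rule integrable_dominated_convergence2[OF _ s_meas _ s_lim s_bound]) simp_all
  ultimately show ?thesis by simp
qed

theorem mainTheorem3:
  fixes M :: "'a measure"
    and A :: "nat \<Rightarrow> 'a \<Rightarrow> 'n::finite \<Rightarrow> 'n \<Rightarrow> bool"
    and \<nu> :: "nat \<Rightarrow> 'n \<Rightarrow> 'n \<Rightarrow> 'a \<Rightarrow> real"
    and x :: "nat \<Rightarrow> 'a \<Rightarrow> 'n \<Rightarrow> real"
    and x0 :: "'n \<Rightarrow> real"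
    and \<theta> :: "'a \<Rightarrow> real"
    and \<Delta> a \<tau> :: real
    and \<alpha> :: "nat \<Rightarrow> real"
    and Lbar :: "real^'n^'n"
  assumes P: "prob_space M"
    and N2: "CARD('n) \<ge> 2"
    and sym: "\<And>i \<omega> n l. A i \<omega> n l = A i \<omega> l n"
    and irrefl: "\<And>i \<omega> n. \<not> A i \<omega> n n"
    and A_iid_indep: "prob_space.indep_vars M (\<lambda>_. count_space UNIV) A UNIV"
    and A_iid_dist: "\<And>i. distr M (count_space UNIV) (A i) = distr M (count_space UNIV) (A 0)"
    and Lbar_def: "Lbar = (\<chi> n l. prob_space.expectation M (\<lambda>\<omega>. lap (A 0 \<omega>) n l))"
    and lambda2_pos: "lambda2 Lbar > 0"
    and \<Delta>_pos: "\<Delta> > 0"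
    and dither_indep: "prob_space.indep_vars M (\<lambda>_. borel) (\<lambda>(i, n, l). \<nu> i n l)
                         {(i, n, l). n \<noteq> l}"
    and dither_unif: "\<And>i n l. n \<noteq> l \<Longrightarrow>
           distr M lborel (\<nu> i n l) = uniform_measure lborel {-\<Delta>/2..<\<Delta>/2}"
    and dither_graph_indep: "prob_space.indep_set M
           (sigma_sets (space M) (\<Union>i. {A i -` S \<inter> space M | S. S \<in> sets (count_space UNIV)}))
           (sigma_sets (space M) (\<Union>(i, n, l)\<in>{(i, n, l). n \<noteq> l}.
                {\<nu> i n l -` S \<inter> space M | S. S \<in> sets borel}))"
    and a_pos: "a > 0"
    and \<tau>_lo: "1/2 < \<tau>" and \<tau>_hi: "\<tau> \<le> 1"
    and \<alpha>_def: "\<And>i. \<alpha> i = a / (real i + 1) powr \<tau>"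
    and x_0: "\<And>\<omega>. x 0 \<omega> = x0"
    and x_Suc: "\<And>i \<omega> n. x (Suc i) \<omega> n =
           (1 - \<alpha> i * real (deg (A i \<omega>) n)) * x i \<omega> n
           + \<alpha> i * (\<Sum>l\<in>{l. A i \<omega> n l}. quant \<Delta> (x i \<omega> l + \<nu> i n l \<omega>))"
    and \<theta>_rv: "\<theta> \<in> borel_measurable M"
    and \<theta>_lim: "AE \<omega> in M. \<forall>n. (\<lambda>i. x i \<omega> n) \<longlonglongrightarrow> \<theta> \<omega>"
  shows "\<forall>n. (\<forall>i. integrable M (\<lambda>\<omega>. (x i \<omega> n - \<theta> \<omega>)\<^sup>2)) \<and>
             (\<lambda>i. prob_space.expectation M (\<lambda>\<omega>. (x i \<omega> n - \<theta> \<omega>)\<^sup>2)) \<longlonglongrightarrow> 0"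
proof -
  interpret prob_space M by (rule P)
  have x_update: "x (Suc i) \<omega> = qc_update \<Delta> (\<alpha> i) (A i \<omega>) (x i \<omega>) (\<lambda>n l. \<nu> i n l \<omega>)" for i \<omega>
    by (simp add: fun_eq_iff x_Suc qc_update_def)
  have A_meas: "A i \<in> measurable M (count_space UNIV)" for i
    using A_iid_indep unfolding indep_vars_def by auto
  have \<nu>_meas: "\<nu> i n l \<in> borel_measurable M" if "n \<noteq> l" for i n l
    using dither_indep that unfolding indep_vars_def by fastforce
  have x_meas: "(\<lambda>\<omega>. x i \<omega> n) \<in> borel_measurable M" for i n
    by (rule qc_iterate_measurable[OF A_meas \<nu>_meas irrefl x_0 x_update])
  have \<alpha>_nonneg: "\<alpha> i \<ge> 0" for i using a_pos by (simp add: \<alpha>_def)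
  have "(\<lambda>i. a / (real i + 1) powr \<tau>) \<longlonglongrightarrow> 0" using \<tau>_lo by real_asymp
  then have \<alpha>_lim: "\<alpha> \<longlonglongrightarrow> 0" by (simp add: \<alpha>_def[abs_def])
  obtain B where B: "\<And>G v y i m. y 0 = x0 \<Longrightarrow> qc_trajectory \<Delta> \<alpha> G v y \<Longrightarrow> \<bar>y i m\<bar> \<le> B"
    using trajectory_uniform_bound[OF \<Delta>_pos \<alpha>_nonneg \<alpha>_lim] by blast
  have "AE \<omega> in M. \<forall>i n l. n \<noteq> l \<longrightarrow> - (\<Delta>/2) \<le> \<nu> i n l \<omega> \<and> \<nu> i n l \<omega> < \<Delta>/2"
    using \<nu>_meas dither_unif \<Delta>_pos by (rule uniform_dither_AE)
  then have x_bounded: "AE \<omega> in M. \<forall>i n. \<bar>x i \<omega> n\<bar> \<le> B"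
  proof eventually_elim
    case (elim \<omega>)
    have "dither_ok \<Delta> (A i \<omega>) (\<lambda>n l. \<nu> i n l \<omega>)" for i
      using elim irrefl unfolding dither_ok_def by metis
    then have "qc_trajectory \<Delta> \<alpha> (\<lambda>i. A i \<omega>) (\<lambda>i n l. \<nu> i n l \<omega>) (\<lambda>i. x i \<omega>)"
      unfolding qc_trajectory_def x_update by simp
    then show ?case using B[of "\<lambda>i. x i \<omega>"] x_0 by blast
  qed
  show ?thesis
  proof
    fix n
    have "AE \<omega> in M. \<forall>i. \<bar>x i \<omega> n\<bar> \<le> B" using x_bounded by eventually_elim blast
    moreover have "AE \<omega> in M. (\<lambda>i. x i \<omega> n) \<longlonglongrightarrow> \<theta> \<omega>" using \<theta>_lim by eventually_elim blast
    ultimately show "(\<forall>i. integrable M (\<lambda>\<omega>. (x i \<omega> n - \<theta> \<omega>)\<^sup>2)) \<and>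
        (\<lambda>i. expectation (\<lambda>\<omega>. (x i \<omega> n - \<theta> \<omega>)\<^sup>2)) \<longlonglongrightarrow> 0"
      by (rule bounded_AE_convergence_mean_square[OF finite_measure_axioms x_meas \<theta>_rv])
  qed
qed

end
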